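(* For any query $Q$, $\mathsf{w}(Q)\le\mathsf{w}(\widehat Q)\le\mathsf{w}(Q)+1$, where $\widehat Q$ is the multivariate extension of $Q$.
   Context: A query is a full conjunctive query $Q = R_1(\mathbf X_1)\wedge\cdots\wedge R_k(\mathbf X_k)$. Multivariate extension: take fresh variables $Z_1,\dots,Z_k$. For a permutation $\sigma$ of $[k]$, the component $\widehat Q_\sigma$ replaces each atom $R_{\sigma_i}(\mathbf X_{\sigma_i})$ by $\widehat R_{\sigma_i}(Z_1,\dots,Z_i,\mathbf X_{\sigma_i})$; $\widehat Q$ is the union of all components. Fractional hypertree width $\mathsf{w}(P)$ of a query $P$: minimum over tree decompositions of $P$ (trees with bags of variables covering every atom schema, the bags containing any variable forming a connected subtree) of the maximum over bags $B$ of the fractional edge cover number of $P$ restricted to $B$ (each atom schema intersected with $B$). For a union of queries, $\mathsf{w}$ is the maximum over the queries. *)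

theory Defs
  imports "HOL-Analysis.Analysis" "HOL-Combinatorics.Permutations"
begin

type_synonym ('r, 'v) query = "('r \<times> 'v list) list"

definition schema :: "'r \<times> 'v list \<Rightarrow> 'v set" where
  "schema a = set (snd a)"

definition qvars :: "('r, 'v) query \<Rightarrow> 'v set" where
  "qvars Q = (\<Union>a\<in>set Q. schema a)"

definition connected_in :: "nat set set \<Rightarrow> nat set \<Rightarrow> bool" where
  "connected_in E S \<longleftrightarrow>
     (\<forall>a\<in>S. \<forall>b\<in>S. (a, b) \<in> {(x, y). {x, y} \<in> E \<and> x \<in> S \<and> y \<in> S}\<^sup>*)"

definition is_tree :: "nat set \<Rightarrow> nat set set \<Rightarrow> bool" where
  "is_tree N E \<longleftrightarrow> finite N \<and> N \<noteq> {} \<and>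
     E \<subseteq> {{a, b} | a b. a \<in> N \<and> b \<in> N \<and> a \<noteq> b} \<and>
     connected_in E N \<and> card E + 1 = card N"

definition tree_decomp ::
  "('r, 'v) query \<Rightarrow> nat set \<Rightarrow> nat set set \<Rightarrow> (nat \<Rightarrow> 'v set) \<Rightarrow> bool" where
  "tree_decomp Q N E bag \<longleftrightarrow> is_tree N E \<and>
     (\<forall>n\<in>N. bag n \<subseteq> qvars Q) \<and>
     (\<forall>a\<in>set Q. \<exists>n\<in>N. schema a \<subseteq> bag n) \<and>
     (\<forall>x. connected_in E {n \<in> N. x \<in> bag n})"

definition fec :: "('r, 'v) query \<Rightarrow> 'v set \<Rightarrow> real" where
  "fec Q B = Inf {(\<Sum>j<length Q. w j) | w :: nat \<Rightarrow> real.
      (\<forall>j<length Q. 0 \<le> w j) \<and>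
      (\<forall>x\<in>B. (\<Sum>j\<in>{j. j < length Q \<and> x \<in> schema (Q ! j) \<inter> B}. w j) \<ge> 1)}"

definition fhw :: "('r, 'v) query \<Rightarrow> real" where
  "fhw Q = Inf {Max ((\<lambda>n. fec Q (bag n)) ` N) | N E bag. tree_decomp Q N E bag}"

definition fhw_union :: "('r, 'v) query set \<Rightarrow> real" where
  "fhw_union U = Max (fhw ` U)"

text \<open>Multivariate extension. Original variables are Inl x; the fresh variable
  Z_j is Inr j (j = 1..k). Atoms of Q are indexed 0..k-1, permutations of {0..<k}.\<close>

datatype 'r hat_rel = Hat 'r

definition mv_component ::
  "('r, 'v) query \<Rightarrow> (nat \<Rightarrow> nat) \<Rightarrow> ('r hat_rel, 'v + nat) query" where
  "mv_component Q \<sigma> =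
     map (\<lambda>i. (Hat (fst (Q ! \<sigma> i)),
               map Inr [1..<i + 2] @ map Inl (snd (Q ! \<sigma> i))))
         [0..<length Q]"

definition mv_extension :: "('r, 'v) query \<Rightarrow> ('r hat_rel, 'v + nat) query set" where
  "mv_extension Q = {mv_component Q \<sigma> | \<sigma>. \<sigma> permutes {..<length Q}}"

end

theory Submission
  imports Defs
begin

text \<open>Up to the fresh variables \<open>Z\<^sub>i\<close>, every component \<open>Q\<^sub>\<sigma>\<close> is \<open>Q\<close> with its atoms
  reordered, which changes neither fractional edge covers nor tree decompositions. Deleting the
  \<open>Z\<^sub>i\<close> from the bags of a tree decomposition of \<open>Q\<^sub>\<sigma>\<close> gives one of \<open>Q\<close>, and every fractional
  edge cover of a bag of \<open>Q\<^sub>\<sigma>\<close> restricts to one of the smaller bag of \<open>Q\<close> of the same weight;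
  hence \<open>w(Q) \<le> w(Q\<^sub>\<sigma>)\<close>. Conversely, adding all of \<open>Z\<^sub>1, \<dots>, Z\<^sub>k\<close> to every bag of a tree
  decomposition of \<open>Q\<close> gives one of \<open>Q\<^sub>\<sigma>\<close>, and since the last atom of \<open>Q\<^sub>\<sigma>\<close> contains all
  \<open>Z\<^sub>i\<close>, raising its weight by one extends a fractional edge cover of a bag of \<open>Q\<close> to the
  enlarged bag; hence \<open>w(Q\<^sub>\<sigma>) \<le> w(Q) + 1\<close>.\<close>

lemma qvars_conv_nth: "qvars P = (\<Union>i<length P. schema (P ! i))"
  unfolding qvars_def set_conv_nth by blast

definition fractional_edge_cover :: "('r, 'v) query \<Rightarrow> 'v set \<Rightarrow> (nat \<Rightarrow> real) \<Rightarrow> bool" where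
  "fractional_edge_cover P B w \<longleftrightarrow> (\<forall>j<length P. 0 \<le> w j) \<and>
     (\<forall>x\<in>B. 1 \<le> (\<Sum>j | j < length P \<and> x \<in> schema (P ! j) \<inter> B. w j))"

lemma fec_eq_Inf: "fec P B = Inf {(\<Sum>j<length P. w j) | w. fractional_edge_cover P B w}"
  by (simp add: fec_def fractional_edge_cover_def)

lemma fec_le_sum: "fractional_edge_cover P B w \<Longrightarrow> fec P B \<le> (\<Sum>j<length P. w j)"
  unfolding fec_eq_Inf
  by (rule cInf_lower, blast, rule bdd_belowI[of _ 0])
     (auto simp: fractional_edge_cover_def intro!: sum_nonneg)

lemma fractional_edge_cover_one:
  assumes "B \<subseteq> qvars P"
  shows "fractional_edge_cover P B (\<lambda>_. 1)"
  unfolding fractional_edge_cover_def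
proof (intro conjI allI impI ballI)
  fix x assume "x \<in> B"
  then obtain i where i: "i < length P" "x \<in> schema (P ! i)"
    using assms by (auto simp: qvars_conv_nth)
  have "(1::real) = (\<Sum>j\<in>{i}. 1)" by simp
  also have "\<dots> \<le> (\<Sum>j | j < length P \<and> x \<in> schema (P ! j) \<inter> B. 1)"
    using i \<open>x \<in> B\<close> by (intro sum_mono2) auto
  finally show "1 \<le> (\<Sum>j | j < length P \<and> x \<in> schema (P ! j) \<inter> B. 1::real)" .
qed simp

(* Without B \<subseteq> qvars P there may be no cover at all, and fec P B is the junk value Inf {}. *)
lemma fec_greatest:
  assumes "B \<subseteq> qvars P" "\<And>w. fractional_edge_cover P B w \<Longrightarrow> c \<le> (\<Sum>j<length P. w j)"
  shows "c \<le> fec P B"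
  unfolding fec_eq_Inf
  using fractional_edge_cover_one[OF assms(1)] assms(2) by (intro cInf_greatest) blast+

lemma fec_nonneg: "B \<subseteq> qvars P \<Longrightarrow> 0 \<le> fec P B"
  by (rule fec_greatest) (auto simp: fractional_edge_cover_def intro!: sum_nonneg)

lemma fractional_edge_cover_permute_list:
  assumes \<sigma>: "\<sigma> permutes {..<length P}"
  shows "fractional_edge_cover (permute_list \<sigma> P) B (w \<circ> \<sigma>) \<longleftrightarrow> fractional_edge_cover P B w"
proof -
  let ?S = "\<lambda>x. {j. j < length P \<and> x \<in> schema (P ! \<sigma> j)}"
  let ?T = "\<lambda>x. {j. j < length P \<and> x \<in> schema (P ! j)}"
  have "bij_betw \<sigma> (?S x) (?T x)" for x
    by (rule bij_betw_subset[OF permutes_imp_bij[OF \<sigma>]])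
      (use permutes_in_image[OF \<sigma>] permutes_in_image[OF permutes_inv[OF \<sigma>]]
             permutes_inverses(1)[OF \<sigma>] in \<open>auto simp: image_iff\<close>, metis)
  then have "(\<Sum>j\<in>?S x. w (\<sigma> j)) = (\<Sum>j\<in>?T x. w j)" for x
    by (rule sum.reindex_bij_betw)
  moreover have "(\<forall>j<length P. 0 \<le> w (\<sigma> j)) \<longleftrightarrow> (\<forall>j<length P. 0 \<le> w j)"
    using permutes_in_image[OF \<sigma>] permutes_surj[OF \<sigma>] by (metis lessThan_iff surj_def)
  ultimately show ?thesis
    by (simp add: fractional_edge_cover_def permute_list_nth[OF \<sigma>] cong: conj_cong)
qed

lemma fec_permute_list:
  assumes \<sigma>: "\<sigma> permutes {..<length P}"
  shows "fec (permute_list \<sigma> P) B = fec P B"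
proof -
  have sum_comp: "(\<Sum>j<length P. (w \<circ> \<sigma>) j) = (\<Sum>j<length P. w j)" for w :: "nat \<Rightarrow> real"
    using sum.permute[OF \<sigma>, of w] by simp
  have inv_comp: "(v \<circ> inv \<sigma>) \<circ> \<sigma> = v" for v :: "nat \<Rightarrow> real"
    using permutes_inverses(2)[OF \<sigma>] by (simp add: comp_def)
  have "{(\<Sum>j<length P. v j) | v. fractional_edge_cover (permute_list \<sigma> P) B v}
      = {(\<Sum>j<length P. w j) | w. fractional_edge_cover P B w}"
  proof (intro equalityI subsetI; elim CollectE exE conjE)
    fix s v assume "s = (\<Sum>j<length P. v j)" "fractional_edge_cover (permute_list \<sigma> P) B v"
    then show "s \<in> {(\<Sum>j<length P. w j) | w. fractional_edge_cover P B w}"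
      using fractional_edge_cover_permute_list[OF \<sigma>, of B "v \<circ> inv \<sigma>"]
        sum_comp[of "v \<circ> inv \<sigma>"]
      unfolding inv_comp by blast
  next
    fix s w assume "s = (\<Sum>j<length P. w j)" "fractional_edge_cover P B w"
    then show "s \<in> {(\<Sum>j<length P. v j) | v. fractional_edge_cover (permute_list \<sigma> P) B v}"
      using fractional_edge_cover_permute_list[OF \<sigma>, of B w] sum_comp[of w]
      by (intro CollectI exI[of _ "w \<circ> \<sigma>"]) simp
  qed
  then show ?thesis
    by (simp add: fec_eq_Inf)
qed

lemma tree_decomp_permute_list:
  "\<sigma> permutes {..<length P} \<Longrightarrow> tree_decomp (permute_list \<sigma> P) = tree_decomp P"
  by (simp add: fun_eq_iff tree_decomp_def qvars_def)

lemma fhw_permute_list: "\<sigma> permutes {..<length P} \<Longrightarrow> fhw (permute_list \<sigma> P) = fhw P"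
  by (simp add: fhw_def fec_permute_list tree_decomp_permute_list)

lemma tree_decomp_Max_fec_nonneg:
  assumes "tree_decomp P N E bag"
  shows "0 \<le> Max ((\<lambda>n. fec P (bag n)) ` N)"
proof -
  from assms have N: "finite N" "N \<noteq> {}" and bags: "\<forall>n\<in>N. bag n \<subseteq> qvars P"
    by (auto simp: tree_decomp_def is_tree_def)
  then obtain n where n: "n \<in> N" by blast
  then have "0 \<le> fec P (bag n)" using bags by (simp add: fec_nonneg)
  also have "\<dots> \<le> Max ((\<lambda>n. fec P (bag n)) ` N)" using N n by simp
  finally show ?thesis .
qed

lemma fhw_le_Max:
  "tree_decomp P N E bag \<Longrightarrow> fhw P \<le> Max ((\<lambda>n. fec P (bag n)) ` N)"
  unfolding fhw_def
  by (rule cInf_lower, blast, rule bdd_belowI[of _ 0]) (auto intro: tree_decomp_Max_fec_nonneg)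

lemma tree_decomp_single_bag: "tree_decomp P {0} {} (\<lambda>_. qvars P)"
  unfolding tree_decomp_def is_tree_def connected_in_def qvars_def by auto

lemma fhw_greatest:
  assumes "\<And>N E bag. tree_decomp P N E bag \<Longrightarrow> c \<le> Max ((\<lambda>n. fec P (bag n)) ` N)"
  shows "c \<le> fhw P"
  unfolding fhw_def using tree_decomp_single_bag assms by (intro cInf_greatest) blast+

lemma Max_image_le_Max_image_add:
  fixes f g :: "'a \<Rightarrow> real"
  assumes "finite N" "N \<noteq> {}" "\<And>n. n \<in> N \<Longrightarrow> f n \<le> g n + c"
  shows "Max (f ` N) \<le> Max (g ` N) + c"
proof -
  have "f n \<le> Max (g ` N) + c" if "n \<in> N" for n
    using assms(1,3) that by (meson Max_ge add_right_mono finite_imageI image_eqI order_trans)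
  then show ?thesis
    using assms(1,2) by simp
qed

definition extends_by_fresh :: "('r, 'v) query \<Rightarrow> ('s, 'v + 'z) query \<Rightarrow> bool" where
  "extends_by_fresh P P' \<longleftrightarrow> length P' = length P \<and>
     (\<forall>i<length P. Inl -` schema (P' ! i) = schema (P ! i))"

lemma qvars_vimage_Inl: "extends_by_fresh P P' \<Longrightarrow> Inl -` qvars P' = qvars P"
  by (auto simp: qvars_conv_nth extends_by_fresh_def)

lemma fec_vimage_Inl_le:
  assumes ext: "extends_by_fresh P P'" and B: "B \<subseteq> qvars P'"
  shows "fec P (Inl -` B) \<le> fec P' B"
proof (rule fec_greatest[OF B])
  fix w assume w: "fractional_edge_cover P' B w"
  have "fractional_edge_cover P (Inl -` B) w"
    unfolding fractional_edge_cover_def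
  proof (intro conjI allI impI ballI)
    show "0 \<le> w j" if "j < length P" for j
      using w ext that by (simp add: fractional_edge_cover_def extends_by_fresh_def)
    fix x assume x: "x \<in> Inl -` B"
    have "{j. j < length P \<and> x \<in> schema (P ! j) \<inter> Inl -` B}
        = {j. j < length P' \<and> Inl x \<in> schema (P' ! j) \<inter> B}"
      using ext x by (auto simp: extends_by_fresh_def)
    moreover have "1 \<le> (\<Sum>j | j < length P' \<and> Inl x \<in> schema (P' ! j) \<inter> B. w j)"
      using w x by (simp add: fractional_edge_cover_def)
    ultimately show "1 \<le> (\<Sum>j | j < length P \<and> x \<in> schema (P ! j) \<inter> Inl -` B. w j)"
      by simp
  qed
  then show "fec P (Inl -` B) \<le> (\<Sum>j<length P'. w j)"
    using ext fec_le_sum by (fastforce simp: extends_by_fresh_def)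
qed

lemma tree_decomp_vimage_Inl:
  assumes ext: "extends_by_fresh P P'" and td: "tree_decomp P' N E bag"
  shows "tree_decomp P N E (\<lambda>n. Inl -` bag n)"
  unfolding tree_decomp_def
proof (intro conjI ballI allI)
  show "is_tree N E" "connected_in E {n \<in> N. x \<in> Inl -` bag n}" for x
    using td by (simp_all add: tree_decomp_def)
  show "Inl -` bag n \<subseteq> qvars P" if "n \<in> N" for n
    using td that qvars_vimage_Inl[OF ext] by (auto simp: tree_decomp_def)
  show "\<exists>n\<in>N. schema a \<subseteq> Inl -` bag n" if "a \<in> set P" for a
  proof -
    obtain i where i: "i < length P" "a = P ! i"
      using \<open>a \<in> set P\<close> by (auto simp: in_set_conv_nth)
    then have "P' ! i \<in> set P'" using ext by (simp add: extends_by_fresh_def)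
    then obtain n where "n \<in> N" "schema (P' ! i) \<subseteq> bag n"
      using td by (auto simp: tree_decomp_def)
    moreover have "schema a = Inl -` schema (P' ! i)"
      using ext i by (simp add: extends_by_fresh_def)
    ultimately show ?thesis by blast
  qed
qed

lemma fhw_le_of_extends_by_fresh:
  assumes ext: "extends_by_fresh P P'"
  shows "fhw P \<le> fhw P'"
proof (rule fhw_greatest)
  fix N E bag assume td: "tree_decomp P' N E bag"
  then have N: "finite N" "N \<noteq> {}" by (auto simp: tree_decomp_def is_tree_def)
  have "fhw P \<le> Max ((\<lambda>n. fec P (Inl -` bag n)) ` N)"
    by (rule fhw_le_Max[OF tree_decomp_vimage_Inl[OF ext td]])
  also have "\<dots> \<le> Max ((\<lambda>n. fec P' (bag n)) ` N) + 0"
    using td fec_vimage_Inl_le[OF ext]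
    by (intro Max_image_le_Max_image_add[OF N]) (simp add: tree_decomp_def)
  finally show "fhw P \<le> Max ((\<lambda>n. fec P' (bag n)) ` N)" by simp
qed

lemma tree_decomp_extend:
  assumes ext: "extends_by_fresh P P'" and td: "tree_decomp P N E bag"
  shows "tree_decomp P' N E (\<lambda>n. Inl ` bag n \<union> (qvars P' \<inter> range Inr))"
  unfolding tree_decomp_def
proof (intro conjI ballI allI)
  show tree: "is_tree N E" using td by (simp add: tree_decomp_def)
  show "connected_in E {n \<in> N. y \<in> Inl ` bag n \<union> (qvars P' \<inter> range Inr)}" for y
  proof (cases "y \<in> qvars P' \<inter> range Inr")
    case True
    then have "{n \<in> N. y \<in> Inl ` bag n \<union> (qvars P' \<inter> range Inr)} = N" by blast
    then show ?thesis using tree by (simp add: is_tree_def)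
  next
    case False
    show ?thesis
    proof (cases y)
      case (Inl x)
      then have "{n \<in> N. y \<in> Inl ` bag n \<union> (qvars P' \<inter> range Inr)} = {n \<in> N. x \<in> bag n}" by auto
      then show ?thesis using td by (simp add: tree_decomp_def)
    next
      case (Inr z)
      then have "{n \<in> N. y \<in> Inl ` bag n \<union> (qvars P' \<inter> range Inr)} = {}" using False by auto
      moreover have "connected_in E {}" by (simp add: connected_in_def)
      ultimately show ?thesis by (simp only:)
    qed
  qed
  show "Inl ` bag n \<union> (qvars P' \<inter> range Inr) \<subseteq> qvars P'" if "n \<in> N" for n
    using td that qvars_vimage_Inl[OF ext] by (auto simp: tree_decomp_def)
  show "\<exists>n\<in>N. schema a \<subseteq> Inl ` bag n \<union> (qvars P' \<inter> range Inr)" if "a \<in> set P'" for a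
  proof -
    obtain i where i: "i < length P" "a = P' ! i"
      using \<open>a \<in> set P'\<close> ext by (auto simp: in_set_conv_nth extends_by_fresh_def)
    then obtain n where n: "n \<in> N" "schema (P ! i) \<subseteq> bag n"
      using td by (meson nth_mem tree_decomp_def)
    have "y \<in> Inl ` bag n \<union> (qvars P' \<inter> range Inr)" if "y \<in> schema a" for y
    proof (cases y)
      case (Inl x)
      have "Inl -` schema a = schema (P ! i)" using ext i by (simp add: extends_by_fresh_def)
      then show ?thesis using n(2) that Inl by auto
    next
      case (Inr z)
      then show ?thesis using that \<open>a \<in> set P'\<close> by (auto simp: qvars_def)
    qed
    then show ?thesis using n(1) by blast
  qed
qed

lemma fractional_edge_cover_extend:
  assumes ext: "extends_by_fresh P P'" and last: "qvars P' \<inter> range Inr \<subseteq> schema (last P')"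
    and w: "fractional_edge_cover P B w"
  shows "fractional_edge_cover P' (Inl ` B \<union> (qvars P' \<inter> range Inr))
           (\<lambda>j. w j + (if j = length P - 1 then 1 else 0))"
    (is "fractional_edge_cover P' ?B' ?w'")
  unfolding fractional_edge_cover_def
proof (intro conjI allI impI ballI)
  have w_nonneg: "0 \<le> w j" if "j < length P'" for j
    using w that ext by (simp add: fractional_edge_cover_def extends_by_fresh_def)
  then show "0 \<le> ?w' j" if "j < length P'" for j
    using that by simp
  fix y assume y: "y \<in> ?B'"
  show "1 \<le> (\<Sum>j | j < length P' \<and> y \<in> schema (P' ! j) \<inter> ?B'. ?w' j)"
  proof (cases y)
    case (Inl x)
    then have x: "x \<in> B" using y by auto
    have idx: "{j. j < length P' \<and> y \<in> schema (P' ! j) \<inter> ?B'}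
        = {j. j < length P \<and> x \<in> schema (P ! j) \<inter> B}"
      using ext x Inl by (auto simp: extends_by_fresh_def)
    have "1 \<le> (\<Sum>j | j < length P \<and> x \<in> schema (P ! j) \<inter> B. w j)"
      using w x by (simp add: fractional_edge_cover_def)
    also have "\<dots> \<le> (\<Sum>j | j < length P \<and> x \<in> schema (P ! j) \<inter> B. ?w' j)"
      by (intro sum_mono) simp
    finally show ?thesis unfolding idx .
  next
    case (Inr z)
    then have fresh: "y \<in> qvars P' \<inter> range Inr" using y by auto
    then have "P' \<noteq> []" by (auto simp: qvars_def)
    moreover have "length P' = length P" using ext by (simp add: extends_by_fresh_def)
    ultimately have last_idx: "length P - 1 < length P'" "last P' = P' ! (length P - 1)"
      by (auto simp: last_conv_nth simp flip: length_greater_0_conv)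
    then have "length P - 1 \<in> {j. j < length P' \<and> y \<in> schema (P' ! j) \<inter> ?B'}"
      using fresh last by auto
    then have "?w' (length P - 1) \<le> (\<Sum>j | j < length P' \<and> y \<in> schema (P' ! j) \<inter> ?B'. ?w' j)"
      using w_nonneg by (intro member_le_sum) auto
    moreover have "1 \<le> ?w' (length P - 1)"
      using w_nonneg last_idx(1) by simp
    ultimately show ?thesis by linarith
  qed
qed

lemma fec_extend_le:
  assumes ext: "extends_by_fresh P P'" and last: "qvars P' \<inter> range Inr \<subseteq> schema (last P')"
    and B: "B \<subseteq> qvars P"
  shows "fec P' (Inl ` B \<union> (qvars P' \<inter> range Inr)) \<le> fec P B + 1"
proof -
  have "fec P' (Inl ` B \<union> (qvars P' \<inter> range Inr)) - 1 \<le> fec P B"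
  proof (rule fec_greatest[OF B])
    fix w assume "fractional_edge_cover P B w"
    then have "fec P' (Inl ` B \<union> (qvars P' \<inter> range Inr))
        \<le> (\<Sum>j<length P. w j + (if j = length P - 1 then 1 else 0))"
      using fec_le_sum[OF fractional_edge_cover_extend[OF ext last]] ext
      by (simp add: extends_by_fresh_def)
    also have "\<dots> \<le> (\<Sum>j<length P. w j) + 1"
      by (simp add: sum.distrib)
    finally show "fec P' (Inl ` B \<union> (qvars P' \<inter> range Inr)) - 1 \<le> (\<Sum>j<length P. w j)"
      by simp
  qed
  then show ?thesis by simp
qed

lemma fhw_extend_le:
  assumes ext: "extends_by_fresh P P'" and last: "qvars P' \<inter> range Inr \<subseteq> schema (last P')"
  shows "fhw P' \<le> fhw P + 1"
proof -
  have "fhw P' - 1 \<le> fhw P"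
  proof (rule fhw_greatest)
    fix N E bag assume td: "tree_decomp P N E bag"
    then have N: "finite N" "N \<noteq> {}" by (auto simp: tree_decomp_def is_tree_def)
    have "fhw P' \<le> Max ((\<lambda>n. fec P' (Inl ` bag n \<union> (qvars P' \<inter> range Inr))) ` N)"
      by (rule fhw_le_Max[OF tree_decomp_extend[OF ext td]])
    also have "\<dots> \<le> Max ((\<lambda>n. fec P (bag n)) ` N) + 1"
      using td fec_extend_le[OF ext last]
      by (intro Max_image_le_Max_image_add[OF N]) (simp add: tree_decomp_def)
    finally show "fhw P' - 1 \<le> Max ((\<lambda>n. fec P (bag n)) ` N)" by simp
  qed
  then show ?thesis by simp
qed

lemma length_mv_component [simp]: "length (mv_component Q \<sigma>) = length Q"
  by (simp add: mv_component_def)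

lemma schema_mv_component:
  "i < length Q \<Longrightarrow> schema (mv_component Q \<sigma> ! i) = Inr ` {1..i+1} \<union> Inl ` schema (Q ! \<sigma> i)"
  by (auto simp: mv_component_def schema_def atLeastLessThanSuc_atLeastAtMost)

lemma extends_by_fresh_mv_component:
  "\<sigma> permutes {..<length Q} \<Longrightarrow> extends_by_fresh (permute_list \<sigma> Q) (mv_component Q \<sigma>)"
  by (auto simp: extends_by_fresh_def schema_mv_component permute_list_nth)

lemma fresh_qvars_mv_component_subset_last:
  "qvars (mv_component Q \<sigma>) \<inter> range Inr \<subseteq> schema (last (mv_component Q \<sigma>))"
proof
  fix y assume y: "y \<in> qvars (mv_component Q \<sigma>) \<inter> range Inr"
  then obtain i where i: "i < length Q" "y \<in> Inr ` {1..i+1}"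
    by (auto simp: qvars_conv_nth schema_mv_component)
  then have "mv_component Q \<sigma> \<noteq> []" "length Q - 1 < length Q" "y \<in> Inr ` {1..length Q - 1 + 1}"
    by (auto simp flip: length_greater_0_conv)
  then show "y \<in> schema (last (mv_component Q \<sigma>))"
    by (simp add: last_conv_nth schema_mv_component)
qed

lemma fhw_mv_component:
  assumes \<sigma>: "\<sigma> permutes {..<length Q}"
  shows "fhw Q \<le> fhw (mv_component Q \<sigma>)" "fhw (mv_component Q \<sigma>) \<le> fhw Q + 1"
  using fhw_le_of_extends_by_fresh fhw_extend_le fresh_qvars_mv_component_subset_last
    extends_by_fresh_mv_component[OF \<sigma>] fhw_permute_list[OF \<sigma>] by metis+

lemma mv_extension_eq_image: "mv_extension Q = mv_component Q ` {\<sigma>. \<sigma> permutes {..<length Q}}"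
  by (auto simp: mv_extension_def)

theorem mainTheorem10:
  fixes Q :: "('r, 'v) query"
  shows "fhw Q \<le> fhw_union (mv_extension Q) \<and> fhw_union (mv_extension Q) \<le> fhw Q + 1"
proof
  have finite: "finite (fhw ` mv_extension Q)"
    by (simp add: mv_extension_eq_image finite_permutations)
  have id: "mv_component Q id \<in> mv_extension Q"
    by (auto simp: mv_extension_eq_image permutes_id)
  have "fhw Q \<le> fhw (mv_component Q id)"
    by (rule fhw_mv_component(1)[OF permutes_id])
  also have "\<dots> \<le> fhw_union (mv_extension Q)"
    unfolding fhw_union_def using finite id by simp
  finally show "fhw Q \<le> fhw_union (mv_extension Q)" .
  have "\<forall>P\<in>mv_extension Q. fhw P \<le> fhw Q + 1"
    by (auto simp: mv_extension_eq_image intro: fhw_mv_component(2))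
  then show "fhw_union (mv_extension Q) \<le> fhw Q + 1"
    unfolding fhw_union_def using finite id by (subst Max_le_iff) auto
qed

end
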